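(* Let $\gamma>0$, $R>0$ and $j\in\mathbb{N}$. Suppose $w\in\mathbb{C}_+$ satisfies $w=G_{j,R}(w)$, where $$G_{j,R}(w):=\frac{-B_j(w)+iA(w)}{2R},\quad A(w):=\log\left|\frac{\mathrm{sq}_-(w^2+i\gamma)-w}{\mathrm{sq}_-(w^2+i\gamma)+w}\right|,\quad B_j(w):=\arg_-\!\left(\frac{\mathrm{sq}_-(w^2+i\gamma)-w}{\mathrm{sq}_-(w^2+i\gamma)+w}\right)+2\pi j,$$ and suppose $w^2+i\gamma\in\mathbb{C}_+$. Then $w^2+i\gamma\in\sigma_d(L_{\gamma,R})$.
   Context: For $\gamma,R>0$, $L_{\gamma,R}=-\frac{d^2}{dx^2}+i\gamma\chi_{[0,R]}$ on $L^2(\mathbb{R}_+)$ with Dirichlet boundary condition at $0$; $\sigma_d$ denotes the set of eigenvalues of finite algebraic multiplicity in $\mathbb{C}\setminus\mathbb{R}_+$. $\arg_-(\zeta)\in[-\pi,\pi)$ and $\mathrm{sq}_-(\zeta)=\sqrt{|\zeta|}e^{\frac i2\arg_-(\zeta)}$ (branch cut along $\mathbb{R}_-$). *)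

theory Defs
  imports "HOL-Analysis.Analysis"
begin

text \<open>Branch conventions of the paper: arg_m z \<in> [-pi, pi), sq_m z = sqrt|z| e^{i arg_m z / 2}.\<close>

definition arg_m :: "complex \<Rightarrow> real" where
  "arg_m z = (if Arg z = pi then - pi else Arg z)"

definition sq_m :: "complex \<Rightarrow> complex" where
  "sq_m z = complex_of_real (sqrt (cmod z)) * exp (\<i> * complex_of_real (arg_m z / 2))"

definition quot_AB :: "real \<Rightarrow> complex \<Rightarrow> complex" where
  "quot_AB \<gamma> w = (sq_m (w\<^sup>2 + \<i> * complex_of_real \<gamma>) - w) / (sq_m (w\<^sup>2 + \<i> * complex_of_real \<gamma>) + w)"

definition A_fun :: "real \<Rightarrow> complex \<Rightarrow> real" where
  "A_fun \<gamma> w = ln (cmod (quot_AB \<gamma> w))"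

definition B_fun :: "real \<Rightarrow> nat \<Rightarrow> complex \<Rightarrow> real" where
  "B_fun \<gamma> j w = arg_m (quot_AB \<gamma> w) + 2 * pi * real j"

definition G_fun :: "real \<Rightarrow> nat \<Rightarrow> real \<Rightarrow> complex \<Rightarrow> complex" where
  "G_fun \<gamma> j R w = (- complex_of_real (B_fun \<gamma> j w) + \<i> * complex_of_real (A_fun \<gamma> w)) / (2 * complex_of_real R)"

definition sq_int :: "(real \<Rightarrow> complex) \<Rightarrow> bool" where
  "sq_int f \<longleftrightarrow> (\<lambda>x. (cmod (f x))\<^sup>2) integrable_on {0..}"

text \<open>Operator domain H^2 \<inter> H^1_0 of L_{gamma,R} (functions normalised to vanish on the negative
  half-line, so that a.e.-classes of continuous representatives are unique); u' and u'' are
  the first and second derivatives. Since the potential jumps only at R, u'' is only required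
  to exist away from R.\<close>
definition in_dom :: "real \<Rightarrow> (real \<Rightarrow> complex) \<Rightarrow> (real \<Rightarrow> complex) \<Rightarrow> (real \<Rightarrow> complex) \<Rightarrow> bool" where
  "in_dom R u u' u'' \<longleftrightarrow>
     (\<forall>x<0. u x = 0) \<and> u 0 = 0 \<and>
     (\<forall>x\<ge>0. (u has_vector_derivative u' x) (at x within {0..})) \<and>
     continuous_on {0..} u' \<and>
     (\<forall>x>0. x \<noteq> R \<longrightarrow> (u' has_vector_derivative u'' x) (at x)) \<and>
     sq_int u \<and> sq_int u' \<and> sq_int u''"

text \<open>gen_ker gamma R lam k = ker (L_{gamma,R} - lam)^k.\<close>
primrec gen_ker :: "real \<Rightarrow> real \<Rightarrow> complex \<Rightarrow> nat \<Rightarrow> (real \<Rightarrow> complex) set" where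
  "gen_ker \<gamma> R lam 0 = {\<lambda>x. 0}"
| "gen_ker \<gamma> R lam (Suc k) = {u. \<exists>u' u''. in_dom R u u' u'' \<and>
      (\<exists>v\<in>gen_ker \<gamma> R lam k. \<forall>x>0. x \<noteq> R \<longrightarrow>
         - u'' x + (\<i> * complex_of_real \<gamma> * complex_of_real (indicator {0..R} x) - lam) * u x = v x)}"

definition is_eigenvalue :: "real \<Rightarrow> real \<Rightarrow> complex \<Rightarrow> bool" where
  "is_eigenvalue \<gamma> R lam \<longleftrightarrow> (\<exists>u\<in>gen_ker \<gamma> R lam 1. u \<noteq> (\<lambda>x. 0))"

definition finite_alg_mult :: "real \<Rightarrow> real \<Rightarrow> complex \<Rightarrow> bool" where
  "finite_alg_mult \<gamma> R lam \<longleftrightarrow> (\<exists>B. finite B \<and>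
     (\<forall>u\<in>(\<Union>k. gen_ker \<gamma> R lam k). \<exists>c. \<forall>x. u x = (\<Sum>b\<in>B. c b * b x)))"

definition sigma_d :: "real \<Rightarrow> real \<Rightarrow> complex set" where
  "sigma_d \<gamma> R = {lam. \<not> (Im lam = 0 \<and> Re lam \<ge> 0) \<and> is_eigenvalue \<gamma> R lam \<and> finite_alg_mult \<gamma> R lam}"

end

theory Submission
  imports Defs "HOL-Real_Asymp.Real_Asymp"
begin

(* Let lam = w^2 + i gamma and K = sq_m lam, so that K^2 = lam and Im K > 0. Unwinding A and B,
  the fixed-point equation w = G(w) says exp(2iRw) (K - w)/(K + w) = 1, which is the matching
  condition w cos(wR) = i K sin(wR). Hence psi = sin(wx) on [0,R], psi = sin(wR) exp(iK(x - R))
  beyond R, is a C^1 solution of -psi'' + i gamma chi_[0,R] psi = lam psi that decays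
  exponentially: lam is an eigenvalue.
  If (L - lam) u = a psi, the Wronskian u' psi - u psi' + a Phi, with Phi the primitive of psi^2
  vanishing at 0, is constant and vanishes at 0. As x tends to infinity, psi and psi' decay while
  Phi tends to a nonzero limit, so a <> 0 would keep |u'| + |K| |u| bounded away from 0,
  contradicting square integrability. So a = 0, the Wronskian of u and psi vanishes and u is a
  multiple of psi: by induction the whole root space is spanned by psi. *)

lemma cis_arg_m: "cis (arg_m z) = cis (Arg z)"
  by (auto simp: arg_m_def complex_eq_iff)

lemma sq_m_power2: "(sq_m z)\<^sup>2 = z"
proof -
  have "(sq_m z)\<^sup>2 = of_real ((sqrt (cmod z))\<^sup>2) * (cis (arg_m z / 2))\<^sup>2"
    by (simp add: sq_m_def cis_conv_exp power_mult_distrib del: real_sqrt_pow2 of_real_power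
        flip: of_real_power)
  also have "(cis (arg_m z / 2))\<^sup>2 = cis (Arg z)"
    by (simp add: power2_eq_square cis_mult cis_arg_m)
  finally show ?thesis
    by (simp add: rcis_cmod_Arg flip: rcis_def)
qed

lemma Im_sq_m_pos:
  assumes "Im z > 0"
  shows "Im (sq_m z) > 0"
proof -
  have Arg: "0 < Arg z" "Arg z < pi"
    using assms Arg_lt_pi by auto
  then have "sq_m z = of_real (sqrt (cmod z)) * cis (Arg z / 2)"
    by (simp add: sq_m_def arg_m_def cis_conv_exp)
  then have "Im (sq_m z) = sqrt (cmod z) * sin (Arg z / 2)"
    by simp
  moreover have "sin (Arg z / 2) > 0"
    using Arg by (intro sin_gt_zero) auto
  ultimately show ?thesis
    using assms by (auto simp: zero_less_mult_iff)
qed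

lemma exp_ln_norm_arg_m:
  assumes "q \<noteq> 0"
  shows "exp (of_real (ln (cmod q)) + \<i> * of_real (arg_m q + 2 * pi * of_int n)) = q"
proof -
  have "exp (of_real (ln (cmod q)) + \<i> * of_real (arg_m q + 2 * pi * of_int n))
      = of_real (cmod q) * cis (arg_m q + 2 * pi * of_int n)"
    using assms by (simp add: exp_add exp_of_real cis_conv_exp)
  also have "cis (arg_m q + 2 * pi * of_int n) = cis (Arg q)"
    using cis_multiple_2pi[of "of_int n"] by (simp add: cis_arg_m flip: cis_mult)
  finally show ?thesis
    by (simp add: rcis_cmod_Arg flip: rcis_def)
qed

lemma exp_G_fun_mult_quot_AB:
  assumes "R \<noteq> 0" and "quot_AB \<gamma> w \<noteq> 0"
  shows "exp (2 * \<i> * of_real R * G_fun \<gamma> j R w) * quot_AB \<gamma> w = 1"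
proof -
  let ?q = "quot_AB \<gamma> w"
  have "2 * \<i> * of_real R * G_fun \<gamma> j R w
      = - (of_real (ln (cmod ?q)) + \<i> * of_real (arg_m ?q + 2 * pi * of_int (int j)))"
    using assms(1) by (simp add: G_fun_def A_fun_def B_fun_def field_simps)
  then have "exp (2 * \<i> * of_real R * G_fun \<gamma> j R w) = inverse ?q"
    by (simp only: exp_minus exp_ln_norm_arg_m[OF assms(2)])
  then show ?thesis
    using assms(2) by simp
qed

lemma Im_G_fun: "Im (G_fun \<gamma> j R w) = A_fun \<gamma> w / (2 * R)"
  by (simp add: G_fun_def)

lemma matching_of_exp_quotient:
  fixes w K :: complex and R :: real
  assumes "exp (2 * \<i> * of_real R * w) * ((K - w) / (K + w)) = 1"
  shows "w * cos (w * of_real R) = \<i> * K * sin (w * of_real R)"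
proof -
  define E where "E = exp (\<i> * w * of_real R)"
  have "E \<noteq> 0" "K + w \<noteq> 0"
    using assms by (auto simp: E_def)
  moreover have "E\<^sup>2 = exp (2 * \<i> * of_real R * w)"
    by (simp add: E_def exp_double [symmetric] algebra_simps)
  ultimately have key: "w * (E\<^sup>2 + 1) = K * (E\<^sup>2 - 1)"
    using assms by (simp add: field_simps)
  have "cos (w * of_real R) = (E + inverse E) / 2" "sin (w * of_real R) = (E - inverse E) / (2 * \<i>)"
    by (simp_all add: cos_exp_eq sin_exp_eq E_def exp_minus algebra_simps)
  then show ?thesis
    unfolding \<open>cos _ = _\<close> \<open>sin _ = _\<close> using key \<open>E \<noteq> 0\<close>
    by (simp add: field_simps power2_eq_square) algebra
qed

lemma sin_nonzero_if_Im_nonzero: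
  fixes z :: complex
  assumes "Im z \<noteq> 0"
  shows "sin z \<noteq> 0"
  using assms by (auto simp: sin_eq_0)

lemma has_vector_derivative_if_le:
  fixes g h :: "real \<Rightarrow> 'a::real_normed_vector"
  assumes g: "\<And>y. (g has_vector_derivative g' y) (at y)"
    and h: "\<And>y. (h has_vector_derivative h' y) (at y)"
    and glue: "x = c \<Longrightarrow> g c = h c \<and> g' c = h' c"
  shows "((\<lambda>y. if y \<le> c then g y else h y) has_vector_derivative (if x \<le> c then g' x else h' x)) (at x)"
    (is "(?f has_vector_derivative _) _")
proof -
  consider "x < c" | "x > c" | "x = c"
    by linarith
  then show ?thesis
  proof cases
    case 1
    have "(?f has_vector_derivative g' x) (at x)"
      by (rule has_vector_derivative_transform_within[OF g[of x], of "c - x"])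
        (use 1 in \<open>auto simp: dist_real_def\<close>)
    with 1 show ?thesis
      by simp
  next
    case 2
    have "(?f has_vector_derivative h' x) (at x)"
      by (rule has_vector_derivative_transform_within[OF h[of x], of "x - c"])
        (use 2 in \<open>auto simp: dist_real_def\<close>)
    with 2 show ?thesis
      by simp
  next
    case 3
    have "(?f has_vector_derivative g' c) (at c within {..c})"
      by (rule has_vector_derivative_transform_within[OF has_vector_derivative_at_within[OF g], of 1])
        auto
    moreover have "(?f has_vector_derivative h' c) (at c within {c..})"
      by (rule has_vector_derivative_transform_within[OF has_vector_derivative_at_within[OF h], of 1])
        (use glue 3 in auto)
    ultimately have "(?f has_vector_derivative g' c) (at c within {..c} \<union> {c..})"
      using glue 3 by (simp add: has_vector_derivative_def has_derivative_within Lim_within_Un)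
    moreover have "{..c} \<union> {c..} = UNIV"
      by auto
    ultimately show ?thesis
      using 3 by simp
  qed
qed

lemma has_vector_derivative_quotient:
  fixes f g :: "real \<Rightarrow> 'a::real_normed_field"
  assumes f: "(f has_vector_derivative f') (at x)" and g: "(g has_vector_derivative g') (at x)"
    and "g x \<noteq> 0"
  shows "((\<lambda>x. f x / g x) has_vector_derivative (f' * g x - f x * g') / (g x)\<^sup>2) (at x)"
proof -
  have "((inverse \<circ> g) has_vector_derivative g' * - (inverse (g x) ^ 2)) (at x)"
    using field_vector_diff_chain_at[OF g DERIV_inverse[OF \<open>g x \<noteq> 0\<close>]] by (simp add: numeral_2_eq_2)
  from has_vector_derivative_mult[OF f this]
  have "((\<lambda>y. f y * inverse (g y)) has_vector_derivative f x * (g' * - (inverse (g x))\<^sup>2) + f' * inverse (g x)) (at x)"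
    by (simp add: o_def)
  moreover have "f x * (g' * - (inverse (g x))\<^sup>2) + f' * inverse (g x) = (f' * g x - f x * g') / (g x)\<^sup>2"
    using \<open>g x \<noteq> 0\<close> by (simp add: field_simps power2_eq_square)
  ultimately show ?thesis
    by (simp add: divide_inverse)
qed

lemma not_integrable_on_eventually_ge:
  fixes f :: "real \<Rightarrow> real"
  assumes int: "f integrable_on {a..}" and nonneg: "\<And>x. x \<ge> a \<Longrightarrow> 0 \<le> f x"
    and "c > 0" and "\<forall>\<^sub>F x in at_top. c \<le> f x"
  shows False
proof -
  obtain b where b: "b \<ge> a" "\<And>x. x \<ge> b \<Longrightarrow> c \<le> f x"
    using assms(4) unfolding eventually_at_top_linorder by (metis max.cobounded1 max.boundedE)
  obtain n :: nat where n: "integral {a..} f < real n * c"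
    using reals_Archimedean3[OF \<open>c > 0\<close>] by blast
  have int_bn: "f integrable_on {b..b + real n}"
    by (rule integrable_on_subinterval[OF int]) (use b in auto)
  have "real n * c = integral {b..b + real n} (\<lambda>x. c)"
    by simp
  also have "\<dots> \<le> integral {b..b + real n} f"
    by (rule integral_le) (use int_bn b in auto)
  also have "\<dots> \<le> integral {a..} f"
    by (rule integral_subset_le[OF _ int_bn int]) (use b nonneg in auto)
  finally show False
    using n by simp
qed

lemma sq_int_not_eventually_ge:
  assumes "sq_int u" and "sq_int v" and "c > 0"
  shows "\<not> (\<forall>\<^sub>F x in at_top. c \<le> cmod (v x) + k * cmod (u x))"
proof
  assume "\<forall>\<^sub>F x in at_top. c \<le> cmod (v x) + k * cmod (u x)"
  then have "\<forall>\<^sub>F x in at_top. c\<^sup>2 / (1 + k\<^sup>2) \<le> (cmod (u x))\<^sup>2 + (cmod (v x))\<^sup>2"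
  proof eventually_elim
    case (elim x)
    let ?p = "cmod (v x)" and ?q = "cmod (u x)"
    have "c\<^sup>2 \<le> (?p + k * ?q)\<^sup>2"
      using elim \<open>c > 0\<close> by (intro power_mono) auto
    also have "\<dots> \<le> (1 + k\<^sup>2) * (?q\<^sup>2 + ?p\<^sup>2)"
      using zero_le_power2[of "k * ?p - ?q"] by (simp add: power2_eq_square algebra_simps)
    finally show ?case
      by (simp add: divide_le_eq add_pos_nonneg mult.commute)
  qed
  moreover have "(\<lambda>x. (cmod (u x))\<^sup>2 + (cmod (v x))\<^sup>2) integrable_on {0..}"
    using assms(1,2) unfolding sq_int_def by (rule integrable_add)
  ultimately show False
    using \<open>c > 0\<close> by (intro not_integrable_on_eventually_ge) (auto simp: add_pos_nonneg)
qed

lemma has_vector_derivative_sin_scaled: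
  "((\<lambda>x. sin (w * of_real x)) has_vector_derivative w * cos (w * of_real x)) (at x within S)"
  for w :: complex
  by (rule has_vector_derivative_real_field[where f="\<lambda>z. sin (w * z)"])
    (auto intro!: derivative_eq_intros)

lemma has_vector_derivative_cos_scaled:
  "((\<lambda>x. w * cos (w * of_real x)) has_vector_derivative - w\<^sup>2 * sin (w * of_real x)) (at x within S)"
  for w :: complex
  by (rule has_vector_derivative_real_field[where f="\<lambda>z. w * cos (w * z)"])
    (auto intro!: derivative_eq_intros simp: power2_eq_square)

lemma has_vector_derivative_exp_shifted:
  "((\<lambda>x. c * exp (a * of_real (x - R))) has_vector_derivative a * c * exp (a * of_real (x - R)))
    (at x within S)"
  for a c :: complex
proof -
  have "((\<lambda>z. c * exp (a * (z - of_real R))) has_field_derivative a * c * exp (a * (of_real x - of_real R)))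
      (at (of_real x))"
    by (auto intro!: derivative_eq_intros)
  from has_vector_derivative_real_field[OF this] show ?thesis
    by simp
qed

lemma sq_int_exp_tail:
  assumes "R \<ge> 0" and "Im K > 0" and "continuous_on {0..R} h"
    and "\<And>x. 0 \<le> x \<Longrightarrow> x < R \<Longrightarrow> g x = h x"
    and "\<And>x. x > R \<Longrightarrow> g x = c * exp (\<i> * K * of_real (x - R))"
  shows "sq_int g"
proof -
  have "(\<lambda>x. (cmod (h x))\<^sup>2) integrable_on {0..R}"
    by (intro integrable_continuous_interval continuous_intros assms(3))
  then have head: "(\<lambda>x. (cmod (g x))\<^sup>2) integrable_on {0..R}"
    by (rule integrable_spike[of _ _ "{R}"]) (auto simp: assms(4))
  have norm_tail: "(cmod (c * exp (\<i> * K * of_real (x - R))))\<^sup>2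
      = (cmod c)\<^sup>2 * exp (2 * Im K * R) * exp (- (2 * Im K) * x)" for x
    by (simp add: norm_mult power_mult_distrib power2_eq_square flip: exp_add)
      (simp add: algebra_simps)
  have "(\<lambda>x. exp (- (2 * Im K) * x)) integrable_on {R..}"
    by (rule integrable_on_exp_minus_to_infinity) (use assms(2) in simp)
  then have "(\<lambda>x. (cmod c)\<^sup>2 * exp (2 * Im K * R) * exp (- (2 * Im K) * x)) integrable_on {R..}"
    by (rule integrable_on_mult_right)
  then have tail: "(\<lambda>x. (cmod (g x))\<^sup>2) integrable_on {R..}"
    by (rule integrable_spike[of _ _ "{R}"]) (auto simp: assms(5) norm_tail simp del: of_real_diff)
  have "(\<lambda>x. (cmod (g x))\<^sup>2) integrable_on ({0..R} \<union> {R..})"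
    by (rule integrable_Un[OF _ head tail]) (use assms(1) in auto)
  moreover have "{0..R} \<union> {R..} = {0..}"
    using assms(1) by auto
  ultimately show ?thesis
    unfolding sq_int_def by simp
qed

locale matched_wavenumbers =
  fixes \<gamma> R :: real and w K :: complex
  assumes R_pos: "R > 0" and Im_w_pos: "Im w > 0" and Im_K_pos: "Im K > 0"
    and K_sq: "K\<^sup>2 = w\<^sup>2 + \<i> * of_real \<gamma>"
    and matching: "w * cos (w * of_real R) = \<i> * K * sin (w * of_real R)"
begin

definition lam :: complex where
  "lam = w\<^sup>2 + \<i> * of_real \<gamma>"

definition s :: complex where
  "s = sin (w * of_real R)"

text \<open>The eigenfunction is built as \<open>wave\<close>, defined and differentiable on the whole line so that
  two-sided derivatives are available, and then cut off to \<open>\<psi>\<close>, which vanishes on the negative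
  half-line as \<^const>\<open>in_dom\<close> requires.\<close>

definition wave :: "real \<Rightarrow> complex" where
  "wave x = (if x \<le> R then sin (w * of_real x) else s * exp (\<i> * K * of_real (x - R)))"

definition wave' :: "real \<Rightarrow> complex" where
  "wave' x = (if x \<le> R then w * cos (w * of_real x) else \<i> * K * s * exp (\<i> * K * of_real (x - R)))"

definition wave'' :: "real \<Rightarrow> complex" where
  "wave'' x = (\<i> * of_real \<gamma> * of_real (indicator {0..R} x) - lam) * wave x"

definition \<psi> :: "real \<Rightarrow> complex" where
  "\<psi> x = (if x < 0 then 0 else wave x)"

definition shifted_eq :: "(real \<Rightarrow> complex) \<Rightarrow> (real \<Rightarrow> complex) \<Rightarrow> (real \<Rightarrow> complex) \<Rightarrow> bool" where
  "shifted_eq u u'' v \<longleftrightarrow> (\<forall>x>0. x \<noteq> R \<longrightarrow>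
     - u'' x + (\<i> * of_real \<gamma> * of_real (indicator {0..R} x) - lam) * u x = v x)"

lemma s_nonzero: "s \<noteq> 0"
  unfolding s_def using Im_w_pos R_pos by (intro sin_nonzero_if_Im_nonzero) simp

lemma w_nonzero: "w \<noteq> 0"
  using Im_w_pos by auto

lemma K_nonzero: "K \<noteq> 0"
  using Im_K_pos by auto

lemma wave_nonzero: "x > 0 \<Longrightarrow> wave x \<noteq> 0"
  using sin_nonzero_if_Im_nonzero[of "w * of_real x"] Im_w_pos s_nonzero by (auto simp: wave_def)

lemma \<psi>_nonneg [simp]: "x \<ge> 0 \<Longrightarrow> \<psi> x = wave x"
  by (simp add: \<psi>_def)

lemma wave'_far: "x > R \<Longrightarrow> wave' x = \<i> * K * wave x"
  by (simp add: wave_def wave'_def)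

lemma wave_has_derivative: "(wave has_vector_derivative wave' x) (at x)"
  unfolding wave_def wave'_def
  by (rule has_vector_derivative_if_le[OF has_vector_derivative_sin_scaled has_vector_derivative_exp_shifted])
    (simp add: s_def matching)

lemma wave'_has_derivative:
  assumes "x > 0" and "x \<noteq> R"
  shows "(wave' has_vector_derivative wave'' x) (at x)"
proof -
  have "(wave' has_vector_derivative
      (if x \<le> R then - w\<^sup>2 * sin (w * of_real x) else \<i> * K * (\<i> * K * s) * exp (\<i> * K * of_real (x - R))))
      (at x)"
    unfolding wave'_def
    by (rule has_vector_derivative_if_le[OF has_vector_derivative_cos_scaled has_vector_derivative_exp_shifted])
      (use assms(2) in simp)
  moreover have "\<i> * K * (\<i> * K * s) * exp (\<i> * K * of_real (x - R))
      = - K\<^sup>2 * s * exp (\<i> * K * of_real (x - R))"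
    by (simp add: power2_eq_square algebra_simps)
  moreover have "wave'' x = (if x \<le> R then - w\<^sup>2 * sin (w * of_real x) else - K\<^sup>2 * s * exp (\<i> * K * of_real (x - R)))"
    using assms(1) by (simp add: wave''_def wave_def lam_def K_sq algebra_simps)
  ultimately show ?thesis
    by (simp only:)
qed

lemma wave'_continuous: "continuous_on S wave'"
proof -
  have "continuous_on UNIV wave'"
    unfolding wave'_def
    by (rule continuous_on_cases_le) (auto intro!: continuous_intros simp: s_def matching)
  then show ?thesis
    by (rule continuous_on_subset) simp
qed

lemma \<psi>_in_dom: "in_dom R \<psi> wave' wave''"
proof -
  have "(\<psi> has_vector_derivative wave' x) (at x within {0..})" if "x \<ge> 0" for x
    by (rule has_vector_derivative_transform_within[OF has_vector_derivative_at_within[OF wave_has_derivative], of 1])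
      (use that in auto)
  moreover have "sq_int \<psi>"
    by (rule sq_int_exp_tail[OF less_imp_le[OF R_pos] Im_K_pos, where h="\<lambda>x. sin (w * of_real x)" and c=s])
      (use R_pos in \<open>auto simp: wave_def intro!: continuous_intros\<close>)
  moreover have "sq_int wave'"
    by (rule sq_int_exp_tail[OF less_imp_le[OF R_pos] Im_K_pos, where h="\<lambda>x. w * cos (w * of_real x)" and c="\<i> * K * s"])
      (use R_pos in \<open>auto simp: wave'_def intro!: continuous_intros\<close>)
  moreover have "sq_int wave''"
    by (rule sq_int_exp_tail[OF less_imp_le[OF R_pos] Im_K_pos, where h="\<lambda>x. (\<i> * of_real \<gamma> - lam) * sin (w * of_real x)" and c="- lam * s"])
      (use R_pos in \<open>auto simp: wave''_def wave_def intro!: continuous_intros\<close>)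
  ultimately show ?thesis
    unfolding in_dom_def using wave'_has_derivative wave'_continuous R_pos
    by (auto simp: \<psi>_def wave_def)
qed

lemma \<psi>_shifted_eq: "shifted_eq \<psi> wave'' (\<lambda>x. 0)"
  by (simp add: shifted_eq_def wave''_def)

lemma wave_continuous: "continuous_on S wave"
  using wave_has_derivative has_vector_derivative_continuous by (blast intro: continuous_at_imp_continuous_on)

definition sin_sq_prim :: "real \<Rightarrow> complex" where
  "sin_sq_prim x = of_real x / 2 - sin (2 * w * of_real x) / (4 * w)"

definition \<Phi> :: "real \<Rightarrow> complex" where
  "\<Phi> x = (if x \<le> R then sin_sq_prim x
     else sin_sq_prim R + s\<^sup>2 * (exp (2 * \<i> * K * of_real (x - R)) - 1) / (2 * \<i> * K))"

definition \<Phi>_inf :: complex where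
  "\<Phi>_inf = sin_sq_prim R - s\<^sup>2 / (2 * \<i> * K)"

lemma sin_sq_prim_has_derivative: "(sin_sq_prim has_vector_derivative (sin (w * of_real x))\<^sup>2) (at x)"
proof -
  have "((\<lambda>z. z / 2 - sin (2 * w * z) / (4 * w)) has_field_derivative 1 / 2 - 2 * w * cos (2 * w * of_real x) / (4 * w))
      (at (of_real x))"
    by (auto intro!: derivative_eq_intros)
  moreover have "1 / 2 - 2 * w * cos (2 * w * of_real x) / (4 * w) = (sin (w * of_real x))\<^sup>2"
    using cos_double_sin[of "w * of_real x"] w_nonzero by (simp add: field_simps)
  ultimately show ?thesis
    unfolding sin_sq_prim_def using has_vector_derivative_real_field by fastforce
qed

lemma \<Phi>_has_derivative: "(\<Phi> has_vector_derivative (wave x)\<^sup>2) (at x)"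
proof -
  have tail: "((\<lambda>x. sin_sq_prim R + s\<^sup>2 * (exp (2 * \<i> * K * of_real (x - R)) - 1) / (2 * \<i> * K))
      has_vector_derivative (s * exp (\<i> * K * of_real (x - R)))\<^sup>2) (at x)" for x
  proof -
    have "((\<lambda>z. sin_sq_prim R + s\<^sup>2 * (exp (2 * \<i> * K * (z - of_real R)) - 1) / (2 * \<i> * K))
        has_field_derivative s\<^sup>2 * (exp (2 * \<i> * K * (of_real x - of_real R)) * (2 * \<i> * K)) / (2 * \<i> * K))
        (at (of_real x))"
      by (auto intro!: derivative_eq_intros)
    moreover have "s\<^sup>2 * (exp (2 * \<i> * K * (of_real x - of_real R)) * (2 * \<i> * K)) / (2 * \<i> * K)
        = (s * exp (\<i> * K * of_real (x - R)))\<^sup>2"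
      using K_nonzero exp_double[of "\<i> * K * of_real (x - R)"] by (simp add: algebra_simps)
    ultimately show ?thesis
      using has_vector_derivative_real_field by fastforce
  qed
  have "(\<Phi> has_vector_derivative
      (if x \<le> R then (sin (w * of_real x))\<^sup>2 else (s * exp (\<i> * K * of_real (x - R)))\<^sup>2)) (at x)"
    unfolding \<Phi>_def by (rule has_vector_derivative_if_le[OF sin_sq_prim_has_derivative tail]) (simp add: s_def)
  then show ?thesis
    by (simp add: wave_def if_distrib[of "\<lambda>z. z\<^sup>2"])
qed

lemma \<Phi>_continuous: "continuous_on S \<Phi>"
  using \<Phi>_has_derivative has_vector_derivative_continuous by (blast intro: continuous_at_imp_continuous_on)

lemma \<Phi>_zero: "\<Phi> 0 = 0"
  using R_pos by (simp add: \<Phi>_def sin_sq_prim_def)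

lemma \<Phi>_far: "x > R \<Longrightarrow> \<Phi> x = \<Phi>_inf + (wave x)\<^sup>2 / (2 * \<i> * K)"
  using K_nonzero exp_double[of "\<i> * K * of_real (x - R)"]
  by (simp add: \<Phi>_def \<Phi>_inf_def wave_def diff_divide_distrib add_divide_distrib algebra_simps)

lemma \<Phi>_inf_nonzero: "\<Phi>_inf \<noteq> 0"
proof
  assume "\<Phi>_inf = 0"
  let ?c = "cos (w * of_real R)"
  have "sin (2 * w * of_real R) = 2 * s * ?c"
    using sin_double[of "w * of_real R"] by (simp add: s_def mult.assoc)
  with \<open>\<Phi>_inf = 0\<close> have "\<i> * K * w * of_real R - \<i> * K * s * ?c - s\<^sup>2 * w = 0"
    using w_nonzero K_nonzero by (simp add: \<Phi>_inf_def sin_sq_prim_def field_simps power2_eq_square) algebra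
  moreover have "\<i> * K * s = w * ?c"
    using matching by (simp add: s_def)
  ultimately have "\<i> * K * w * of_real R = w * (s\<^sup>2 + ?c\<^sup>2)"
    by (simp add: power2_eq_square algebra_simps)
  then have "\<i> * K * of_real R = 1"
    using w_nonzero by (simp add: s_def mult.assoc)
  then have "Re (\<i> * K * of_real R) = 1"
    by simp
  moreover have "Im K * R > 0"
    using Im_K_pos R_pos by simp
  ultimately show False
    by simp
qed

lemma wronskian_zero:
  assumes dom: "in_dom R u u' u''" and eq: "shifted_eq u u'' (\<lambda>x. a * \<psi> x)" and "X \<ge> 0"
  shows "u' X * wave X - u X * wave' X + a * \<Phi> X = 0"
proof -
  let ?W = "\<lambda>x. u' x * wave x - u x * wave' x + a * \<Phi> x"
  have u_der: "\<And>x. x \<ge> 0 \<Longrightarrow> (u has_vector_derivative u' x) (at x within {0..})"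
    and u'_cont: "continuous_on {0..} u'"
    and u'_der: "\<And>x. x > 0 \<Longrightarrow> x \<noteq> R \<Longrightarrow> (u' has_vector_derivative u'' x) (at x)"
    and u_0: "u 0 = 0"
    using dom unfolding in_dom_def by auto
  have "continuous_on {0..} u"
    unfolding continuous_on_eq_continuous_within using u_der has_vector_derivative_continuous by blast
  then have "continuous_on {0..} ?W"
    by (intro continuous_intros u'_cont wave_continuous wave'_continuous \<Phi>_continuous)
  then have "continuous_on {0..X} ?W"
    by (rule continuous_on_subset) auto
  moreover have "(?W has_derivative (\<lambda>h. 0)) (at x within {0..X})" if x: "x \<in> {0..X} - {0, R, X}" for x
  proof -
    from x have "x > 0" "x \<noteq> R"
      by auto
    have "(u has_vector_derivative u' x) (at x)"
      using u_der[of x] at_within_interior[of x "{0..}"] \<open>x > 0\<close> by simp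
    then have "(?W has_vector_derivative
        u' x * wave' x + u'' x * wave x - (u x * wave'' x + u' x * wave' x) + a * (wave x)\<^sup>2) (at x)"
      using \<open>x > 0\<close> \<open>x \<noteq> R\<close>
      by (intro has_vector_derivative_add has_vector_derivative_diff has_vector_derivative_mult
          has_vector_derivative_mult_right u'_der wave_has_derivative wave'_has_derivative \<Phi>_has_derivative)
    moreover have "u' x * wave' x + u'' x * wave x - (u x * wave'' x + u' x * wave' x) + a * (wave x)\<^sup>2 = 0"
    proof -
      define V where "V = \<i> * of_real \<gamma> * of_real (indicator {0..R} x) - lam"
      have "- u'' x + V * u x = a * wave x"
        using eq \<open>x > 0\<close> \<open>x \<noteq> R\<close> by (simp add: shifted_eq_def V_def)
      moreover have "wave'' x = V * wave x"
        by (simp add: wave''_def V_def)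
      ultimately show ?thesis
        by (simp add: power2_eq_square) algebra
    qed
    ultimately show ?thesis
      by (simp add: has_vector_derivative_def has_derivative_at_withinI)
  qed
  ultimately have "?W X = ?W 0"
    by (intro has_derivative_zero_unique_strong_interval[of "{0, R, X}"]) (use \<open>X \<ge> 0\<close> in auto)
  also have "?W 0 = 0"
    using u_0 \<Phi>_zero by (simp add: wave_def R_pos less_imp_le)
  finally show ?thesis .
qed

lemma wronskian_far_bound:
  assumes "in_dom R u u' u''" and "shifted_eq u u'' (\<lambda>x. a * \<psi> x)" and "X > R"
  shows "cmod (a * \<Phi>_inf)
    \<le> cmod (wave X) * (cmod (u' X) + cmod K * cmod (u X)) + cmod a * (cmod (wave X))\<^sup>2 / (2 * cmod K)"
proof -
  have W: "u' X * wave X - u X * wave' X + a * \<Phi> X = 0"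
    using wronskian_zero[OF assms(1,2)] assms(3) R_pos by simp
  have "a * \<Phi>_inf = a * \<Phi> X - a * (wave X)\<^sup>2 / (2 * \<i> * K)"
    using assms(3) by (simp add: \<Phi>_far distrib_left)
  also have "a * \<Phi> X = - (wave X * (u' X - \<i> * K * u X))"
    using W assms(3) by (simp add: wave'_far) algebra
  finally have "cmod (a * \<Phi>_inf)
      \<le> cmod (wave X * (u' X - \<i> * K * u X)) + cmod (a * (wave X)\<^sup>2 / (2 * \<i> * K))"
    by (metis norm_minus_cancel norm_triangle_ineq4)
  also have "\<dots> = cmod (wave X) * cmod (u' X - \<i> * K * u X) + cmod a * (cmod (wave X))\<^sup>2 / (2 * cmod K)"
    by (simp add: norm_mult norm_divide norm_power)
  also have "cmod (u' X - \<i> * K * u X) \<le> cmod (u' X) + cmod K * cmod (u X)"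
    using norm_triangle_ineq4[of "u' X" "\<i> * K * u X"] by (simp add: norm_mult)
  finally show ?thesis
    by (simp add: mult_left_mono)
qed

lemma wave_tendsto_zero: "(wave \<longlongrightarrow> 0) at_top"
proof -
  have "((\<lambda>X. cmod s * exp (- Im K * (X - R))) \<longlongrightarrow> 0) at_top"
    using Im_K_pos by real_asymp
  moreover have "\<forall>\<^sub>F X in at_top. cmod s * exp (- Im K * (X - R)) = cmod (wave X)"
    using eventually_gt_at_top[of R] by eventually_elim (simp add: wave_def norm_mult)
  ultimately have "((\<lambda>X. cmod (wave X)) \<longlongrightarrow> 0) at_top"
    by (rule Lim_transform_eventually)
  then show ?thesis
    by (rule tendsto_norm_zero_cancel)
qed

lemma shifted_eq_\<psi>_coefficient_zero:
  assumes dom: "in_dom R u u' u''" and eq: "shifted_eq u u'' (\<lambda>x. a * \<psi> x)"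
  shows "a = 0"
proof (rule ccontr)
  assume "a \<noteq> 0"
  define c where "c = cmod (a * \<Phi>_inf) / 2"
  have "c > 0"
    using \<open>a \<noteq> 0\<close> \<Phi>_inf_nonzero by (simp add: c_def)
  have "((\<lambda>X. cmod a * (cmod (wave X))\<^sup>2 / (2 * cmod K)) \<longlongrightarrow> cmod a * 0\<^sup>2 / (2 * cmod K)) at_top"
    using K_nonzero by (intro tendsto_intros tendsto_norm_zero wave_tendsto_zero) auto
  then have "\<forall>\<^sub>F X in at_top. cmod a * (cmod (wave X))\<^sup>2 / (2 * cmod K) < c"
    using \<open>c > 0\<close> by (simp add: order_tendstoD(2))
  moreover have "\<forall>\<^sub>F X in at_top. cmod (wave X) < 1"
    using order_tendstoD(2)[OF tendsto_norm_zero[OF wave_tendsto_zero], of 1] by simp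
  moreover have "\<forall>\<^sub>F X in at_top. X > R"
    by (rule eventually_gt_at_top)
  ultimately have "\<forall>\<^sub>F X in at_top. c \<le> cmod (u' X) + cmod K * cmod (u X)"
  proof eventually_elim
    case (elim X)
    let ?T = "cmod (u' X) + cmod K * cmod (u X)"
    have "2 * c \<le> cmod (wave X) * ?T + c"
      using wronskian_far_bound[OF dom eq \<open>X > R\<close>] elim(1) by (simp add: c_def)
    also have "cmod (wave X) * ?T \<le> ?T"
      using elim(2) by (intro mult_left_le_one_le) auto
    finally show ?case
      by simp
  qed
  with \<open>c > 0\<close> dom show False
    using sq_int_not_eventually_ge by (auto simp: in_dom_def)
qed

lemma shifted_eq_homogeneous_multiple:
  assumes dom: "in_dom R u u' u''" and eq: "shifted_eq u u'' (\<lambda>x. 0)"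
  shows "\<exists>C. \<forall>x. u x = C * \<psi> x"
proof -
  have u_der: "\<And>x. x \<ge> 0 \<Longrightarrow> (u has_vector_derivative u' x) (at x within {0..})"
    and u_neg: "\<And>x. x < 0 \<Longrightarrow> u x = 0" and u_0: "u 0 = 0"
    using dom unfolding in_dom_def by auto
  have W: "u' x * wave x - u x * wave' x = 0" if "x \<ge> 0" for x
    using wronskian_zero[OF dom, of 0 x] eq that by simp
  let ?q = "\<lambda>x. u x / wave x"
  have "continuous_on {0..} u"
    unfolding continuous_on_eq_continuous_within using u_der has_vector_derivative_continuous by blast
  then have "continuous_on {0<..} u"
    by (rule continuous_on_subset) auto
  then have "continuous_on {0<..} ?q"
    using wave_nonzero by (intro continuous_intros wave_continuous) auto
  moreover have "(?q has_derivative (\<lambda>h. 0)) (at x within {0<..})" if "x \<in> {0<..} - {R}" for x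
  proof -
    from that have "x > 0" "x \<noteq> R"
      by auto
    have "(u has_vector_derivative u' x) (at x)"
      using u_der[of x] at_within_interior[of x "{0..}"] \<open>x > 0\<close> by simp
    then have "(?q has_vector_derivative (u' x * wave x - u x * wave' x) / (wave x)\<^sup>2) (at x)"
      using wave_has_derivative wave_nonzero[OF \<open>x > 0\<close>] by (rule has_vector_derivative_quotient)
    then show ?thesis
      using W[of x] \<open>x > 0\<close> by (simp add: has_vector_derivative_def has_derivative_at_withinI)
  qed
  ultimately have q_const: "?q x = ?q R" if "x > 0" for x
    using R_pos that
    by (intro has_derivative_zero_unique_strong_connected[of "{0<..}" "{R}"]) auto
  have "u x = ?q R * \<psi> x" for x
  proof (cases "x > 0")
    case True
    then show ?thesis
      using q_const[OF True] wave_nonzero[OF True] by (simp add: field_simps)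
  next
    case False
    then show ?thesis
      using u_neg u_0 by (cases "x = 0") (auto simp: \<psi>_def wave_def R_pos less_imp_le)
  qed
  then show ?thesis
    by blast
qed

lemma gen_ker_multiple_\<psi>: "u \<in> gen_ker \<gamma> R lam k \<Longrightarrow> \<exists>C. \<forall>x. u x = C * \<psi> x"
proof (induction k arbitrary: u)
  case 0
  then show ?case
    by auto
next
  case (Suc k)
  then obtain u' u'' v where dom: "in_dom R u u' u''" and "v \<in> gen_ker \<gamma> R lam k"
    and eq: "shifted_eq u u'' v"
    by (auto simp: shifted_eq_def)
  then obtain a where "v = (\<lambda>x. a * \<psi> x)"
    using Suc.IH by blast
  with eq have "shifted_eq u u'' (\<lambda>x. a * \<psi> x)"
    by simp
  then have "a = 0"
    by (rule shifted_eq_\<psi>_coefficient_zero[OF dom])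
  with \<open>shifted_eq u u'' (\<lambda>x. a * \<psi> x)\<close> show ?case
    using shifted_eq_homogeneous_multiple[OF dom] by simp
qed

lemma \<psi>_in_gen_ker: "\<psi> \<in> gen_ker \<gamma> R lam 1"
  using \<psi>_in_dom \<psi>_shifted_eq by (auto simp: shifted_eq_def)

lemma lam_not_nonneg_real: "\<not> (Im lam = 0 \<and> Re lam \<ge> 0)"
proof
  assume "Im lam = 0 \<and> Re lam \<ge> 0"
  moreover have "lam = K\<^sup>2"
    by (simp add: lam_def K_sq)
  ultimately have "Re K * Im K = 0" and K_ineq: "(Im K)\<^sup>2 \<le> (Re K)\<^sup>2"
    by (auto simp: power2_eq_square)
  with Im_K_pos have "Re K = 0"
    by simp
  with K_ineq Im_K_pos show False
    by simp
qed

lemma lam_in_sigma_d: "lam \<in> sigma_d \<gamma> R"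
proof -
  have "\<psi> \<noteq> (\<lambda>x. 0)"
    using wave_nonzero[OF R_pos] R_pos by (metis \<psi>_nonneg less_imp_le)
  then have "is_eigenvalue \<gamma> R lam"
    unfolding is_eigenvalue_def using \<psi>_in_gen_ker by blast
  moreover have "finite_alg_mult \<gamma> R lam"
    unfolding finite_alg_mult_def
  proof (intro exI[of _ "{\<psi>}"] conjI ballI)
    fix u
    assume "u \<in> (\<Union>k. gen_ker \<gamma> R lam k)"
    then obtain C where "\<forall>x. u x = C * \<psi> x"
      using gen_ker_multiple_\<psi> by blast
    then show "\<exists>c. \<forall>x. u x = (\<Sum>b\<in>{\<psi>}. c b * b x)"
      by (intro exI[of _ "\<lambda>_. C"]) simp
  qed simp
  ultimately show ?thesis
    using lam_not_nonneg_real by (simp add: sigma_d_def)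
qed

end

theorem lemma2p2:
  fixes \<gamma> R :: real and j :: nat and w :: complex
  assumes "\<gamma> > 0" and "R > 0"
    and "Im w > 0"
    and "w = G_fun \<gamma> j R w"
    and "Im (w\<^sup>2 + \<i> * complex_of_real \<gamma>) > 0"
  shows "w\<^sup>2 + \<i> * complex_of_real \<gamma> \<in> sigma_d \<gamma> R"
proof -
  define K where "K = sq_m (w\<^sup>2 + \<i> * complex_of_real \<gamma>)"
  have "quot_AB \<gamma> w = (K - w) / (K + w)"
    by (simp add: quot_AB_def K_def)
  have "A_fun \<gamma> w = 2 * R * Im w"
    using Im_G_fun[of \<gamma> j R w] assms(2,4) by (simp add: field_simps)
  then have "A_fun \<gamma> w > 0"
    using assms(2,3) by simp
  then have "quot_AB \<gamma> w \<noteq> 0"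
    by (auto simp: A_fun_def)
  then have "exp (2 * \<i> * of_real R * w) * ((K - w) / (K + w)) = 1"
    using exp_G_fun_mult_quot_AB[of R \<gamma> w j] assms(2,4) \<open>quot_AB \<gamma> w = _\<close> by simp
  then have "w * cos (w * of_real R) = \<i> * K * sin (w * of_real R)"
    by (rule matching_of_exp_quotient)
  moreover have "Im K > 0" "K\<^sup>2 = w\<^sup>2 + \<i> * complex_of_real \<gamma>"
    using assms(5) by (simp_all add: K_def Im_sq_m_pos sq_m_power2)
  ultimately interpret matched_wavenumbers \<gamma> R w K
    using assms(2,3) by unfold_locales
  show ?thesis
    using lam_in_sigma_d by (simp add: lam_def)
qed

end
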